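(* Let $G$ be a compact Hausdorff group with normalized Haar measure $m_G$, and let $\Phi$ be a Young function satisfying the $\Delta_2$-condition. Let $\mathscr{F}_{\Phi,0}:L^\Phi(G)\to c_0\text{-}\bigoplus_{[\pi]\in\widehat{G}}\mathcal{B}_2(\mathcal{H}_\pi)$ be the Fourier transform $f\mapsto\widehat f$, and let $\nu_{\Phi,0}:\mathcal{B}(G)\to c_0\text{-}\bigoplus_{[\pi]\in\widehat{G}}\mathcal{B}_2(\mathcal{H}_\pi)$ be the vector measure $\nu_{\Phi,0}(A)=\widehat{\chi_A}$. Then $\nu_{\Phi,0}$ has finite variation, and its variation coincides with the Haar measure: $|\nu_{\Phi,0}|(A)=m_G(A)$ for every Borel set $A\subseteq G$.
   Context: $\mathcal{B}(G)$ is the Borel $\sigma$-algebra of $G$. A Young function is a convex $\Phi:[0,\infty]\to[0,\infty]$ with $\Phi(0)=0$ and $\lim_{x\to\infty}\Phi(x)=\infty$; it satisfies the $\Delta_2$-condition if there are $K>0$, $x_0>0$ with $\Phi(2x)\le K\Phi(x)$ for all $x\ge x_0$. $L^\Phi(G)$ is the space of (classes of) complex measurable functions $f$ with finite Luxemburg norm $\|f\|_\Phi=\inf\{k>0:\int_G\Phi(|f|/k)\,dm_G\le1\}$; it is contained in $L^1(G)$. $\widehat G$ is the set of equivalence classes of irreducible unitary representations $\pi$ of $G$ on (finite-dimensional) Hilbert spaces $\mathcal{H}_\pi$ of dimension $d_\pi$; for $f\in L^1(G)$, $\widehat f(\pi)=\int_G f(t)\pi(t)^*\,dm_G(t)$.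 $\mathcal{B}_2(\mathcal{H}_\pi)$ denotes the operators on $\mathcal{H}_\pi$, normed by the operator norm. The space $c_0\text{-}\bigoplus_{[\pi]}\mathcal{B}_2(\mathcal{H}_\pi)$ consists of families $(x_{[\pi]})$ with $x_{[\pi]}\in\mathcal{B}_2(\mathcal{H}_\pi)$ such that for every $\varepsilon>0$ only finitely many $[\pi]$ have $\|x_{[\pi]}\|\ge\varepsilon$, with norm $\sup_{[\pi]}\|x_{[\pi]}\|$. For a vector measure $\nu$ with values in a Banach space $X$, its variation is $|\nu|(A)=\sup\sum_{E\in\rho}\|\nu(E)\|$, the supremum over finite Borel partitions $\rho$ of $A$. *)

theory Defs
  imports "HOL-Probability.Probability"
begin

definition young_function :: "(ennreal \<Rightarrow> ennreal) \<Rightarrow> bool" where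
  "young_function \<Phi> \<longleftrightarrow>
     (\<forall>x y t. 0 \<le> t \<and> t \<le> 1 \<longrightarrow>
        \<Phi> (ennreal t * x + ennreal (1 - t) * y) \<le> ennreal t * \<Phi> x + ennreal (1 - t) * \<Phi> y)
   \<and> \<Phi> 0 = 0
   \<and> ((\<lambda>x::real. \<Phi> (ennreal x)) \<longlongrightarrow> \<infinity>) at_top"

definition delta2 :: "(ennreal \<Rightarrow> ennreal) \<Rightarrow> bool" where
  "delta2 \<Phi> \<longleftrightarrow> (\<exists>K::real>0. \<exists>x0::real>0. \<forall>x\<ge>x0. \<Phi> (ennreal (2 * x)) \<le> ennreal K * \<Phi> (ennreal x))"

text \<open>The group is written additively (class group_add, not necessarily commutative).
  A normalized Haar measure is a left-invariant Radon probability measure on the Borel sets.\<close>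

definition haar_prob_measure :: "'g::{topological_group_add,t2_space} measure \<Rightarrow> bool" where
  "haar_prob_measure M \<longleftrightarrow>
     sets M = sets borel
   \<and> emeasure M UNIV = 1
   \<and> (\<forall>A\<in>sets borel. \<forall>g. emeasure M ((\<lambda>x. g + x) ` A) = emeasure M A)
   \<and> (\<forall>A\<in>sets borel. emeasure M A = (INF U\<in>{U. open U \<and> A \<subseteq> U}. emeasure M U))
   \<and> (\<forall>U. open U \<longrightarrow> emeasure M U = (SUP K\<in>{K. compact K \<and> K \<subseteq> U}. emeasure M K))"

definition matvec :: "nat \<Rightarrow> (nat \<Rightarrow> nat \<Rightarrow> complex) \<Rightarrow> (nat \<Rightarrow> complex) \<Rightarrow> (nat \<Rightarrow> complex)" where
  "matvec d A v = (\<lambda>i. if i < d then (\<Sum>j<d. A i j * v j) else 0)"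

definition cvecs :: "nat \<Rightarrow> (nat \<Rightarrow> complex) set" where
  "cvecs d = {v. \<forall>k\<ge>d. v k = 0}"

definition csubspace :: "nat \<Rightarrow> (nat \<Rightarrow> complex) set \<Rightarrow> bool" where
  "csubspace d V \<longleftrightarrow> V \<subseteq> cvecs d \<and> (\<lambda>_. 0) \<in> V
     \<and> (\<forall>v\<in>V. \<forall>w\<in>V. (\<lambda>k. v k + w k) \<in> V)
     \<and> (\<forall>c. \<forall>v\<in>V. (\<lambda>k. c * v k) \<in> V)"

definition unitary_rep :: "nat \<Rightarrow> ('g::{topological_group_add} \<Rightarrow> nat \<Rightarrow> nat \<Rightarrow> complex) \<Rightarrow> bool" where
  "unitary_rep d \<pi> \<longleftrightarrow>
     (\<forall>g. \<forall>i<d. \<forall>j<d. (\<Sum>k<d. cnj (\<pi> g k i) * \<pi> g k j) = (if i = j then 1 else 0))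
   \<and> (\<forall>g h. \<forall>i<d. \<forall>j<d. \<pi> (g + h) i j = (\<Sum>k<d. \<pi> g i k * \<pi> h k j))
   \<and> (\<forall>i<d. \<forall>j<d. continuous_on UNIV (\<lambda>g. \<pi> g i j))"

definition irreducible_unitary_rep :: "nat \<Rightarrow> ('g::{topological_group_add} \<Rightarrow> nat \<Rightarrow> nat \<Rightarrow> complex) \<Rightarrow> bool" where
  "irreducible_unitary_rep d \<pi> \<longleftrightarrow> d \<ge> 1 \<and> unitary_rep d \<pi>
   \<and> (\<forall>V. csubspace d V \<and> (\<forall>g. \<forall>v\<in>V. matvec d (\<pi> g) v \<in> V)
          \<longrightarrow> V = {\<lambda>_. 0} \<or> V = cvecs d)"

definition vnorm :: "nat \<Rightarrow> (nat \<Rightarrow> complex) \<Rightarrow> real" where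
  "vnorm d v = sqrt (\<Sum>i<d. (cmod (v i))\<^sup>2)"

definition opnorm :: "nat \<Rightarrow> (nat \<Rightarrow> nat \<Rightarrow> complex) \<Rightarrow> real" where
  "opnorm d A = (SUP v\<in>{v\<in>cvecs d. vnorm d v \<le> 1}. vnorm d (matvec d A v))"

text \<open>hat(chi_A)(pi) = integral over A of pi(t)^*; entry (i,j) is the integral of conj(pi t j i).\<close>
definition fourier_indicator ::
  "'g measure \<Rightarrow> 'g set \<Rightarrow> ('g \<Rightarrow> nat \<Rightarrow> nat \<Rightarrow> complex) \<Rightarrow> nat \<Rightarrow> nat \<Rightarrow> complex" where
  "fourier_indicator M A \<pi> = (\<lambda>i j. LINT t:A|M. cnj (\<pi> t j i))"

text \<open>Norm of nu(A) = hat(chi_A) in the c_0-direct sum of the B_2(H_pi) (operator norms):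
  supremum over the irreducible unitary representations. Equivalent representations give
  unitarily equivalent coefficients, so the supremum over representatives equals the
  supremum over classes in the dual.\<close>
definition nu_norm :: "'g::{topological_group_add} measure \<Rightarrow> 'g set \<Rightarrow> ennreal" where
  "nu_norm M A = (SUP p\<in>{(d, \<pi>). irreducible_unitary_rep d \<pi>}.
                    ennreal (opnorm (fst p) (fourier_indicator M A (snd p))))"

definition borel_partitions :: "'g::topological_space set \<Rightarrow> 'g set set set" where
  "borel_partitions A = {\<rho>. finite \<rho> \<and> \<rho> \<subseteq> sets borel \<and> disjoint \<rho> \<and> \<Union>\<rho> = A}"

definition nu_variation :: "'g::{topological_group_add} measure \<Rightarrow> 'g set \<Rightarrow> ennreal" where
  "nu_variation M A = (SUP \<rho>\<in>borel_partitions A. \<Sum>E\<in>\<rho>. nu_norm M E)"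

end

theory Submission
  imports Defs
begin

text \<open>For a unitary representation \<open>\<pi>\<close> and a Borel set \<open>E\<close>, pairing
  \<open>F = \<integral>\<^sub>E \<pi>(t)\<^sup>* dm\<close> against a vector \<open>x\<close> gives
  \<open>\<langle>F v, x\<rangle> = \<integral>\<^sub>E \<langle>v, \<pi>(t) x\<rangle> dm\<close>; since each \<open>\<pi>(t)\<close> is an isometry, taking \<open>x = F v\<close>
  yields \<open>\<parallel>F v\<parallel> \<le> m(E) \<parallel>v\<parallel>\<close>. The trivial representation attains \<open>m(E)\<close>, so
  \<open>\<parallel>\<nu>(E)\<parallel> = m(E)\<close>. Hence \<open>E \<mapsto> \<parallel>\<nu>(E)\<parallel>\<close> is additive and every Borel
  partition of \<open>A\<close> contributes exactly \<open>m(A)\<close> to the variation.\<close>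

lemma vnorm_nonneg: "0 \<le> vnorm d v"
  by (simp add: vnorm_def sum_nonneg)

lemma of_real_vnorm_square: "complex_of_real ((vnorm d v)\<^sup>2) = (\<Sum>i<d. v i * cnj (v i))"
  by (simp add: vnorm_def sum_nonneg complex_norm_square del: of_real_power)

lemma norm_sum_mult_cnj_le_vnorm: "cmod (\<Sum>j<d. v j * cnj (w j)) \<le> vnorm d v * vnorm d w"
proof -
  have "cmod (\<Sum>j<d. v j * cnj (w j)) \<le> (\<Sum>j<d. \<bar>cmod (v j)\<bar> * \<bar>cmod (w j)\<bar>)"
    by (rule order_trans[OF norm_sum]) (simp add: norm_mult)
  also have "\<dots> \<le> L2_set (\<lambda>j. cmod (v j)) {..<d} * L2_set (\<lambda>j. cmod (w j)) {..<d}"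
    by (rule L2_set_mult_ineq)
  finally show ?thesis
    by (simp add: L2_set_def vnorm_def)
qed

lemma opnorm_le:
  assumes "0 \<le> c" "\<And>v. vnorm d (matvec d A v) \<le> c * vnorm d v"
  shows "opnorm d A \<le> c"
  unfolding opnorm_def
proof (rule cSUP_least)
  show "{v \<in> cvecs d. vnorm d v \<le> 1} \<noteq> {}"
    by (auto intro!: exI[of _ "\<lambda>_. 0"] simp: cvecs_def vnorm_def)
  show "vnorm d (matvec d A v) \<le> c" if "v \<in> {v \<in> cvecs d. vnorm d v \<le> 1}" for v
    using that assms by (metis (mono_tags) mem_Collect_eq mult_left_le order_trans)
qed

lemma vnorm_matvec_le_opnorm:
  assumes "0 \<le> c" "\<And>v. vnorm d (matvec d A v) \<le> c * vnorm d v"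
    and "v \<in> cvecs d" "vnorm d v \<le> 1"
  shows "vnorm d (matvec d A v) \<le> opnorm d A"
  unfolding opnorm_def
proof (rule cSUP_upper)
  show "v \<in> {v \<in> cvecs d. vnorm d v \<le> 1}"
    using assms(3,4) by simp
  show "bdd_above ((\<lambda>v. vnorm d (matvec d A v)) ` {v \<in> cvecs d. vnorm d v \<le> 1})"
    using assms(1,2) by (intro bdd_aboveI[of _ c]) (auto intro: order_trans mult_left_le)
qed

lemma vnorm_matvec_unitary_rep:
  assumes "unitary_rep d \<pi>"
  shows "vnorm d (matvec d (\<pi> g) x) = vnorm d x"
proof -
  have orth: "(\<Sum>j<d. cnj (\<pi> g j i') * \<pi> g j i) = (if i' = i then 1 else 0)"
    if "i < d" "i' < d" for i i'
    using assms that unfolding unitary_rep_def by auto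
  have "complex_of_real ((vnorm d (matvec d (\<pi> g) x))\<^sup>2)
      = (\<Sum>j<d. \<Sum>i<d. \<Sum>i'<d. x i * cnj (x i') * (cnj (\<pi> g j i') * \<pi> g j i))"
    unfolding of_real_vnorm_square matvec_def
    by (simp add: sum_product mult_ac)
  also have "\<dots> = (\<Sum>i<d. \<Sum>i'<d. x i * cnj (x i') * (\<Sum>j<d. cnj (\<pi> g j i') * \<pi> g j i))"
    unfolding sum_distrib_left
    by (rule trans[OF sum.swap], rule sum.cong[OF refl], rule sum.swap)
  also have "\<dots> = complex_of_real ((vnorm d x)\<^sup>2)"
    unfolding of_real_vnorm_square by (simp add: orth if_distrib[of "times _"] cong: if_cong)
  finally show ?thesis
    using vnorm_nonneg by (simp only: of_real_eq_iff power2_eq_iff_nonneg)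
qed

lemma unitary_rep_entry_norm_le:
  assumes "unitary_rep d \<pi>" "i < d" "j < d"
  shows "cmod (\<pi> g i j) \<le> 1"
proof -
  have "complex_of_real (\<Sum>k<d. (cmod (\<pi> g k j))\<^sup>2) = (\<Sum>k<d. cnj (\<pi> g k j) * \<pi> g k j)"
    by (simp add: complex_norm_square mult.commute del: of_real_power)
  also have "\<dots> = 1"
    using assms unfolding unitary_rep_def by auto
  finally have "(\<Sum>k<d. (cmod (\<pi> g k j))\<^sup>2) = 1"
    by (metis of_real_eq_1_iff)
  moreover have "(cmod (\<pi> g i j))\<^sup>2 \<le> (\<Sum>k<d. (cmod (\<pi> g k j))\<^sup>2)"
    by (rule member_le_sum) (use assms in auto)
  ultimately show ?thesis
    by (simp add: power_le_one_iff abs_le_square_iff)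
qed

lemma unitary_rep_entry_integrable:
  assumes "finite_measure M" "sets M = sets borel" "unitary_rep d \<pi>" "i < d" "j < d"
  shows "integrable M (\<lambda>t. \<pi> t i j)"
proof -
  have "continuous_on UNIV (\<lambda>t. \<pi> t i j)"
    using assms(3-) unfolding unitary_rep_def by auto
  then have "(\<lambda>t. \<pi> t i j) \<in> borel_measurable M"
    using borel_measurable_continuous_onI measurable_cong_sets[OF assms(2) refl] by blast
  with unitary_rep_entry_norm_le[OF assms(3-)] show ?thesis
    by (intro finite_measure.integrable_const_bound[OF assms(1), where B=1]) auto
qed

lemma irreducible_unitary_rep_trivial:
  "irreducible_unitary_rep 1 (\<lambda>(_::'g::topological_group_add) _ _. 1)"
proof -
  have "V = cvecs 1" if V: "csubspace 1 V" "V \<noteq> {\<lambda>_. 0}" for V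
  proof
    show "V \<subseteq> cvecs 1"
      using V unfolding csubspace_def by blast
    obtain w where w: "w \<in> V" "w \<noteq> (\<lambda>_. 0)"
      using V unfolding csubspace_def by blast
    then have "w \<in> cvecs 1"
      using V unfolding csubspace_def by blast
    then have w_eq: "w = (\<lambda>k. if k = 0 then w 0 else 0)"
      by (auto simp: cvecs_def)
    then have "w 0 \<noteq> 0"
      using w(2) by (metis (full_types))
    show "cvecs 1 \<subseteq> V"
    proof
      fix u assume "u \<in> cvecs 1"
      then have "u = (\<lambda>k. (u 0 / w 0) * w k)"
        using \<open>w 0 \<noteq> 0\<close> by (subst w_eq) (auto simp: cvecs_def)
      then show "u \<in> V"
        using V w(1) unfolding csubspace_def by metis
    qed
  qed
  then show ?thesis
    unfolding irreducible_unitary_rep_def unitary_rep_def by auto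
qed

lemma set_integrable_sum:
  fixes f :: "'i \<Rightarrow> 'a \<Rightarrow> 'b::{banach, second_countable_topology}"
  assumes "\<And>i. i \<in> I \<Longrightarrow> set_integrable M A (f i)"
  shows "set_integrable M A (\<lambda>x. \<Sum>i\<in>I. f i x)"
  using assms unfolding set_integrable_def scaleR_sum_right
  by (rule Bochner_Integration.integrable_sum)

lemma set_integral_sum:
  fixes f :: "'i \<Rightarrow> 'a \<Rightarrow> 'b::{banach, second_countable_topology}"
  assumes "\<And>i. i \<in> I \<Longrightarrow> set_integrable M A (f i)"
  shows "(LINT x:A|M. \<Sum>i\<in>I. f i x) = (\<Sum>i\<in>I. LINT x:A|M. f i x)"
  using assms unfolding set_integrable_def set_lebesgue_integral_def scaleR_sum_right
  by (rule Bochner_Integration.integral_sum)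

lemma norm_set_integral_le_measure:
  fixes f :: "'a \<Rightarrow> 'b::{banach, second_countable_topology}"
  assumes "finite_measure M" "A \<in> sets M" "0 \<le> B" "\<And>x. x \<in> A \<Longrightarrow> norm (f x) \<le> B"
  shows "norm (LINT x:A|M. f x) \<le> measure M A * B"
proof (cases "set_integrable M A f")
  case True
  interpret finite_measure M by (rule assms(1))
  have "norm (LINT x:A|M. f x) \<le> (LINT x:A|M. norm (f x))"
    using True by (rule set_integral_norm_bound)
  also have "\<dots> \<le> (LINT x:A|M. B)"
    using True assms(2,4)
    by (intro set_integral_mono set_integrable_norm) (auto simp: set_integrable_def emeasure_eq_measure)
  also have "\<dots> = measure M A * B"
    using assms(2) by (simp add: set_integral_const)
  finally show ?thesis .
next
  case False
  then show ?thesis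
    using assms(3) by (simp add: set_integrable_def set_lebesgue_integral_def not_integrable_integral_eq)
qed

lemma matvec_fourier_indicator_adjoint:
  assumes "finite_measure M" "sets M = sets borel" "E \<in> sets M" "unitary_rep d \<pi>"
  shows "(\<Sum>i<d. matvec d (fourier_indicator M E \<pi>) v i * cnj (x i))
       = (LINT t:E|M. \<Sum>j<d. v j * cnj (matvec d (\<pi> t) x j))"
proof -
  have entry_integrable: "integrable M (\<lambda>t. \<pi> t j i)" if "i < d" "j < d" for i j
    using unitary_rep_entry_integrable[OF assms(1,2,4)] that by blast
  have summand_integrable: "set_integrable M E (\<lambda>t. cnj (\<pi> t j i) * v j * cnj (x i))"
    if "i \<in> {..<d}" "j \<in> {..<d}" for i j
    unfolding set_integrable_def using assms(3) entry_integrable that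
    by (intro integrable_mult_indicator) auto
  have "(\<Sum>i<d. matvec d (fourier_indicator M E \<pi>) v i * cnj (x i))
      = (\<Sum>i<d. \<Sum>j<d. LINT t:E|M. cnj (\<pi> t j i) * v j * cnj (x i))"
    by (simp add: matvec_def fourier_indicator_def sum_distrib_right)
  also have "\<dots> = (LINT t:E|M. \<Sum>i<d. \<Sum>j<d. cnj (\<pi> t j i) * v j * cnj (x i))"
    by (subst set_integral_sum, fastforce intro: set_integrable_sum summand_integrable)
      (intro sum.cong refl set_integral_sum[symmetric] summand_integrable)
  also have "\<dots> = (LINT t:E|M. \<Sum>j<d. v j * cnj (matvec d (\<pi> t) x j))"
    by (subst sum.swap) (simp add: matvec_def sum_distrib_left mult_ac)
  finally show ?thesis .
qed

lemma vnorm_matvec_fourier_indicator_le: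
  assumes "finite_measure M" "sets M = sets borel" "E \<in> sets M" "unitary_rep d \<pi>"
  shows "vnorm d (matvec d (fourier_indicator M E \<pi>) v) \<le> measure M E * vnorm d v"
proof -
  define x where "x = matvec d (fourier_indicator M E \<pi>) v"
  have "(vnorm d x)\<^sup>2 = cmod (\<Sum>i<d. x i * cnj (x i))"
    by (metis of_real_vnorm_square norm_of_real abs_power2)
  also have "\<dots> = cmod (LINT t:E|M. \<Sum>j<d. v j * cnj (matvec d (\<pi> t) x j))"
    unfolding x_def by (simp only: matvec_fourier_indicator_adjoint[OF assms])
  also have "\<dots> \<le> measure M E * (vnorm d v * vnorm d x)"
  proof (rule norm_set_integral_le_measure[OF assms(1,3)])
    show "0 \<le> vnorm d v * vnorm d x"
      by (simp add: vnorm_nonneg)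
    show "cmod (\<Sum>j<d. v j * cnj (matvec d (\<pi> t) x j)) \<le> vnorm d v * vnorm d x" for t
      using norm_sum_mult_cnj_le_vnorm[where d=d and v=v and w="matvec d (\<pi> t) x"]
      by (simp add: vnorm_matvec_unitary_rep[OF assms(4)])
  qed
  finally have "vnorm d x * vnorm d x \<le> (measure M E * vnorm d v) * vnorm d x"
    by (simp add: power2_eq_square mult_ac)
  then show ?thesis
    unfolding x_def[symmetric]
    using vnorm_nonneg[of d x] vnorm_nonneg[of d v] measure_nonneg[of M E]
    by (metis mult_nonneg_nonneg mult_right_le_imp_le order_le_less)
qed

lemma opnorm_fourier_indicator_le:
  assumes "finite_measure M" "sets M = sets borel" "E \<in> sets M" "unitary_rep d \<pi>"
  shows "opnorm d (fourier_indicator M E \<pi>) \<le> measure M E"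
  by (rule opnorm_le[OF measure_nonneg vnorm_matvec_fourier_indicator_le[OF assms]])

lemma opnorm_fourier_indicator_trivial:
  fixes M :: "'g::topological_group_add measure"
  assumes "finite_measure M" "sets M = sets borel" "E \<in> sets M"
  shows "opnorm 1 (fourier_indicator M E (\<lambda>_ _ _. 1)) = measure M E"
proof (rule antisym)
  have unitary: "unitary_rep 1 (\<lambda>(_::'g) _ _. 1)"
    using irreducible_unitary_rep_trivial irreducible_unitary_rep_def by blast
  then show "opnorm 1 (fourier_indicator M E (\<lambda>_ _ _. 1)) \<le> measure M E"
    by (rule opnorm_fourier_indicator_le[OF assms])
  define e0 where "e0 = (\<lambda>k::nat. if k = 0 then (1::complex) else 0)"
  have "fourier_indicator M E (\<lambda>_ _ _. 1) 0 0 = complex_of_real (measure M E)"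
    using assms(1,3)
    by (simp add: fourier_indicator_def set_integral_const finite_measure.emeasure_finite
        scaleR_conv_of_real)
  then have "measure M E = vnorm 1 (matvec 1 (fourier_indicator M E (\<lambda>_ _ _. 1)) e0)"
    by (simp add: vnorm_def matvec_def e0_def)
  also have "\<dots> \<le> opnorm 1 (fourier_indicator M E (\<lambda>_ _ _. 1))"
    using vnorm_matvec_fourier_indicator_le[OF assms unitary]
    by (rule vnorm_matvec_le_opnorm[OF measure_nonneg]) (simp_all add: e0_def cvecs_def vnorm_def)
  finally show "measure M E \<le> opnorm 1 (fourier_indicator M E (\<lambda>_ _ _. 1))" .
qed

lemma nu_norm_eq_emeasure:
  assumes "finite_measure M" "sets M = sets borel" "E \<in> sets borel"
  shows "nu_norm M E = emeasure M E"
proof -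
  have E: "E \<in> sets M"
    using assms(2,3) by simp
  have "nu_norm M E \<le> ennreal (measure M E)"
    unfolding nu_norm_def
    by (rule SUP_least) (auto simp: irreducible_unitary_rep_def
        intro!: ennreal_leI opnorm_fourier_indicator_le[OF assms(1,2) E])
  moreover have "ennreal (measure M E) \<le> nu_norm M E"
    unfolding nu_norm_def
    using irreducible_unitary_rep_trivial opnorm_fourier_indicator_trivial[OF assms(1,2) E]
    by (intro SUP_upper2[of "(1, \<lambda>_ _ _. 1)"]) auto
  ultimately show ?thesis
    using assms(1) E by (simp add: finite_measure.emeasure_eq_measure)
qed

lemma nu_variation_eq_emeasure:
  assumes "finite_measure M" "sets M = sets borel" "A \<in> sets borel"
  shows "nu_variation M A = emeasure M A"
proof -
  have partition_sum: "(\<Sum>E\<in>\<rho>. nu_norm M E) = emeasure M A" if "\<rho> \<in> borel_partitions A" for \<rho>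
  proof -
    have \<rho>: "finite \<rho>" "\<rho> \<subseteq> sets M" "disjoint \<rho>" "\<Union>\<rho> = A"
      using that assms(2) unfolding borel_partitions_def by auto
    then have "(\<Sum>E\<in>\<rho>. nu_norm M E) = (\<Sum>E\<in>\<rho>. emeasure M E)"
      using assms(1,2) by (intro sum.cong refl nu_norm_eq_emeasure) auto
    also have "\<dots> = emeasure M (\<Union>E\<in>\<rho>. E)"
      using \<rho> by (intro sum_emeasure) (auto simp: disjoint_family_on_def disjoint_def)
    finally show ?thesis
      using \<rho>(4) by simp
  qed
  have "{A} \<in> borel_partitions A"
    using assms(3) by (simp add: borel_partitions_def disjoint_def)
  then have "borel_partitions A \<noteq> {}"
    by blast
  then show ?thesis
    unfolding nu_variation_def by (simp add: partition_sum SUP_constant cong: SUP_cong)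
qed

theorem lemma3p1:
  fixes M :: "'g::{topological_group_add, t2_space} measure"
    and \<Phi> :: "ennreal \<Rightarrow> ennreal"
  assumes "compact (UNIV :: 'g set)"
    and "haar_prob_measure M"
    and "young_function \<Phi>"
    and "delta2 \<Phi>"
  shows "nu_variation M UNIV < \<infinity> \<and> (\<forall>A\<in>sets borel. nu_variation M A = emeasure M A)"
proof -
  have sets: "sets M = sets borel" and total: "emeasure M UNIV = 1"
    using assms(2) unfolding haar_prob_measure_def by auto
  have "space M = UNIV"
    using sets_eq_imp_space_eq[OF sets] by simp
  with total have "finite_measure M"
    by (intro finite_measureI) simp
  then have "nu_variation M A = emeasure M A" if "A \<in> sets borel" for A
    using nu_variation_eq_emeasure sets that by blast
  with total show ?thesis
    by simp
qed

end
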